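(* Let $k$ be a positive integer and $n = 2k^2+2$. Construct a $k$-regular bipartite graph $G$ on $n$ vertices as follows: take two vertices $x$ and $y$ and add $k$ distinct (vertex-disjoint apart from $x,y$) $k$-resistors between $x$ and $y$. Then a.a.s. (as $k\to\infty$) the random subgraph $G(p)$ does not contain a perfect matching for any $p = o(n^{-1/4})$. On the other hand, a.a.s. $G(p)$ contains no isolated vertices for any $p = \omega(\log n/\sqrt n)$.
   Context: A $k$-resistor between two vertices $x$ and $y$ is the bipartite graph with vertex set $\{x,y\}\dot\cup X'\dot\cup Y'$, where $|X'|=|Y'|=k$, with designated vertices $x'\in X'$, $y'\in Y'$, and edge set $\{xx',yy'\}\cup(\{ab : a\in X', b\in Y'\}\setminus\{x'y'\})$. $G(p)$ retains each edge of $G$ independently with probability $p$. "A.a.s." means with probability tending to $1$. *)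

theory Defs
  imports "HOL-Probability.Probability" "HOL-Library.Landau_Symbols"
begin

datatype rvtx = VX | VY | VA nat nat | VB nat nat
  \<comment> \<open>VA i a: vertex a of the side X' of the i-th resistor (VA i 0 = x');
      VB i b: vertex b of the side Y' of the i-th resistor (VB i 0 = y')\<close>

definition resistor_verts :: "nat \<Rightarrow> nat \<Rightarrow> rvtx set" where
  "resistor_verts k i = {VA i a | a. a < k} \<union> {VB i b | b. b < k}"

definition resistor_edges :: "nat \<Rightarrow> nat \<Rightarrow> rvtx set set" where
  "resistor_edges k i = {{VX, VA i 0}, {VY, VB i 0}} \<union>
     {{VA i a, VB i b} | a b. a < k \<and> b < k \<and> (a, b) \<noteq> (0, 0)}"

definition G_verts :: "nat \<Rightarrow> rvtx set" where
  "G_verts k = {VX, VY} \<union> (\<Union>i<k. resistor_verts k i)"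

definition G_edges :: "nat \<Rightarrow> rvtx set set" where
  "G_edges k = (\<Union>i<k. resistor_edges k i)"

definition random_subgraph :: "'a set set \<Rightarrow> real \<Rightarrow> 'a set set pmf" where
  "random_subgraph E p =
     map_pmf (\<lambda>f. {e \<in> E. f e}) (Pi_pmf E False (\<lambda>_. bernoulli_pmf p))"

definition has_perfect_matching :: "'a set \<Rightarrow> 'a set set \<Rightarrow> bool" where
  "has_perfect_matching V H \<longleftrightarrow>
     (\<exists>M \<subseteq> H. (\<forall>e\<in>M. \<forall>e'\<in>M. e \<noteq> e' \<longrightarrow> e \<inter> e' = {}) \<and> \<Union>M = V)"

definition has_isolated_vertex :: "'a set \<Rightarrow> 'a set set \<Rightarrow> bool" where
  "has_isolated_vertex V H \<longleftrightarrow> (\<exists>v\<in>V. \<forall>e\<in>H. v \<notin> e)"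

end

theory Submission
  imports Defs "HOL-Real_Asymp.Real_Asymp"
begin

text \<open>A perfect matching covers VX and VY by pendant edges, say of resistors i and j.
  If i \<noteq> j, the k vertices of Y' in resistor i can only be matched into X' minus x',
  which has k - 1 vertices. So G(p) must keep both pendant edges of one resistor,
  which happens with probability at most k p^2 = o(k / sqrt n) = o(1).
  On the other hand every vertex has degree k \<ge> sqrt n / 2, so the expected number
  of isolated vertices is at most n (1 - p)^k \<le> n exp (-p k), which is at most 1 / n
  once p \<ge> 4 ln n / sqrt n.\<close>

definition vertex_degree :: "'a set set \<Rightarrow> 'a \<Rightarrow> nat" where
  "vertex_degree E v = card {e \<in> E. v \<in> e}"

definition matching :: "'a set set \<Rightarrow> bool" where
  "matching M \<longleftrightarrow> (\<forall>e\<in>M. \<forall>e'\<in>M. e \<noteq> e' \<longrightarrow> e \<inter> e' = {})"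

lemma matchingD: "matching M \<Longrightarrow> e \<in> M \<Longrightarrow> e' \<in> M \<Longrightarrow> x \<in> e \<Longrightarrow> x \<in> e' \<Longrightarrow> e = e'"
  unfolding matching_def by blast

lemma has_perfect_matching_def':
  "has_perfect_matching V H \<longleftrightarrow> (\<exists>M \<subseteq> H. matching M \<and> \<Union>M = V)"
  unfolding has_perfect_matching_def matching_def ..

lemma set_pmf_random_subgraph: "set_pmf (random_subgraph E p) \<subseteq> Pow E"
  by (auto simp: random_subgraph_def)

lemma prob_random_subgraph_edges_eq:
  assumes "finite E" "S \<subseteq> E" "0 \<le> p" "p \<le> 1"
  shows "measure_pmf.prob (random_subgraph E p) {H. \<forall>e\<in>S. (e \<in> H) = b}
         = (if b then p else 1 - p) ^ card S"
proof -
  have "(\<lambda>f. {e \<in> E. f e}) -` {H. \<forall>e\<in>S. (e \<in> H) = b} = Pi E (\<lambda>e. if e \<in> S then {b} else UNIV)"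
    using assms(2) by (auto simp: Pi_def)
  then have "measure_pmf.prob (random_subgraph E p) {H. \<forall>e\<in>S. (e \<in> H) = b}
      = (\<Prod>e\<in>E. measure_pmf.prob (bernoulli_pmf p) (if e \<in> S then {b} else UNIV))"
    by (simp add: random_subgraph_def measure_map_pmf measure_Pi_pmf_Pi[OF assms(1)])
  also have "\<dots> = (\<Prod>e\<in>E. if e \<in> S then (if b then p else 1 - p) else 1)"
    using assms by (intro prod.cong) (auto simp: measure_pmf_single)
  also have "\<dots> = (if b then p else 1 - p) ^ card S"
    using assms by (simp add: prod.If_cases Int_absorb1)
  finally show ?thesis .
qed

lemma prob_has_isolated_vertex_le:
  assumes "finite V" "finite E" "0 \<le> p" "p \<le> 1"
    and min_degree: "\<And>v. v \<in> V \<Longrightarrow> d \<le> vertex_degree E v"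
  shows "measure_pmf.prob (random_subgraph E p) {H. has_isolated_vertex V H}
         \<le> real (card V) * (1 - p) ^ d"
proof -
  let ?P = "random_subgraph E p" and ?N = "\<lambda>v. {e \<in> E. v \<in> e}"
  have "{H. has_isolated_vertex V H} \<subseteq> (\<Union>v\<in>V. {H. \<forall>e\<in>?N v. (e \<in> H) = False})"
    by (auto simp: has_isolated_vertex_def)
  then have "measure_pmf.prob ?P {H. has_isolated_vertex V H}
      \<le> measure_pmf.prob ?P (\<Union>v\<in>V. {H. \<forall>e\<in>?N v. (e \<in> H) = False})"
    by (rule measure_pmf.finite_measure_mono) simp
  also have "\<dots> \<le> (\<Sum>v\<in>V. measure_pmf.prob ?P {H. \<forall>e\<in>?N v. (e \<in> H) = False})"
    using assms(1) by (intro measure_pmf.finite_measure_subadditive_finite) auto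
  also have "\<dots> = (\<Sum>v\<in>V. (1 - p) ^ vertex_degree E v)"
    unfolding vertex_degree_def using assms(2-4)
    by (intro sum.cong refl, subst prob_random_subgraph_edges_eq) auto
  also have "\<dots> \<le> (\<Sum>v\<in>V. (1 - p) ^ d)"
    using assms(3,4) min_degree by (intro sum_mono power_decreasing) auto
  finally show ?thesis by simp
qed

lemma one_minus_power_le_exp:
  fixes p :: real
  assumes "0 \<le> p" "p \<le> 1"
  shows "(1 - p) ^ k \<le> exp (- (p * real k))"
proof -
  have "(1 - p) ^ k \<le> exp (- p) ^ k"
    using assms exp_ge_add_one_self[of "- p"] by (intro power_mono) auto
  also have "\<dots> = exp (- (p * real k))"
    by (simp add: exp_of_nat_mult[symmetric] mult.commute)
  finally show ?thesis .
qed

lemma tendsto_prob_compl_1: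
  assumes "eventually (\<lambda>k. measure_pmf.prob (M k) {x. P k x} \<le> b k) sequentially"
    and "b \<longlonglongrightarrow> 0"
  shows "(\<lambda>k. measure_pmf.prob (M k) {x. \<not> P k x}) \<longlonglongrightarrow> 1"
proof -
  have "(\<lambda>k. measure_pmf.prob (M k) {x. P k x}) \<longlonglongrightarrow> 0"
    by (rule tendsto_sandwich[OF _ assms(1) tendsto_const assms(2)]) simp
  then have "(\<lambda>k. 1 - measure_pmf.prob (M k) {x. P k x}) \<longlonglongrightarrow> 1 - 0"
    by (intro tendsto_diff tendsto_const)
  moreover have "measure_pmf.prob (M k) {x. \<not> P k x} = 1 - measure_pmf.prob (M k) {x. P k x}" for k
    using measure_pmf.prob_compl[of "{x. P k x}" "M k"] by (simp add: Collect_neg_eq Compl_eq_Diff_UNIV)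
  ultimately show ?thesis by simp
qed

lemma G_verts_eq:
  "G_verts k = {VX, VY} \<union> case_prod VA ` ({..<k} \<times> {..<k}) \<union> case_prod VB ` ({..<k} \<times> {..<k})"
  unfolding G_verts_def resistor_verts_def by auto

lemma finite_G_verts: "finite (G_verts k)"
  unfolding G_verts_eq by simp

lemma card_G_verts_le: "real (card (G_verts k)) \<le> 2 * real k ^ 2 + 2"
proof -
  have "card (G_verts k) \<le> card {VX, VY} + card (case_prod VA ` ({..<k} \<times> {..<k}))
                            + card (case_prod VB ` ({..<k} \<times> {..<k}))"
    unfolding G_verts_eq by (intro card_Un_le[THEN order_trans] add_right_mono card_Un_le)
  also have "\<dots> \<le> 2 + k * k + k * k"
    by (intro add_mono card_image_le[THEN order_trans]) (auto simp: card_insert_le)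
  finally show ?thesis
    by (simp add: power2_eq_square flip: of_nat_mult of_nat_add of_nat_le_iff)
qed

lemma finite_G_edges: "finite (G_edges k)"
proof -
  have "finite (resistor_edges k i)" for i
  proof (rule finite_subset)
    show "resistor_edges k i \<subseteq> {{VX, VA i 0}, {VY, VB i 0}}
            \<union> (\<lambda>(a, b). {VA i a, VB i b}) ` ({..<k} \<times> {..<k})"
      unfolding resistor_edges_def by auto
  qed auto
  then show ?thesis
    unfolding G_edges_def by auto
qed

lemma pendant_edges_in_G_edges:
  assumes "i < k"
  shows "{VX, VA i 0} \<in> G_edges k" "{VY, VB i 0} \<in> G_edges k"
  using assms unfolding G_edges_def resistor_edges_def by auto

lemma internal_edge_in_G_edges:
  assumes "i < k" "a < k" "b < k" "(a, b) \<noteq> (0, 0)"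
  shows "{VA i a, VB i b} \<in> G_edges k"
  using assms unfolding G_edges_def resistor_edges_def by blast

lemma G_edgesE:
  assumes "e \<in> G_edges k"
  obtains i where "i < k" "e = {VX, VA i 0}"
  | i where "i < k" "e = {VY, VB i 0}"
  | i a b where "i < k" "a < k" "b < k" "(a, b) \<noteq> (0, 0)" "e = {VA i a, VB i b}"
  using assms unfolding G_edges_def resistor_edges_def by blast

lemma vertex_degree_G_ge:
  assumes "v \<in> G_verts k"
  shows "k \<le> vertex_degree (G_edges k) v"
proof -
  have degree_ge: "k \<le> vertex_degree (G_edges k) v"
    if "inj_on f {..<k}" "f ` {..<k} \<subseteq> {e \<in> G_edges k. v \<in> e}" for f :: "nat \<Rightarrow> rvtx set"
    using card_inj_on_le[OF that] finite_G_edges unfolding vertex_degree_def by simp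
  consider "v = VX" | "v = VY" | i a where "i < k" "a < k" "v = VA i a"
    | i b where "i < k" "b < k" "v = VB i b"
    using assms unfolding G_verts_def resistor_verts_def by auto
  then show ?thesis
  proof cases
    case 1
    show ?thesis
    proof (rule degree_ge)
      show "inj_on (\<lambda>i. {VX, VA i 0}) {..<k}"
        by (auto simp: inj_on_def doubleton_eq_iff)
      show "(\<lambda>i. {VX, VA i 0}) ` {..<k} \<subseteq> {e \<in> G_edges k. v \<in> e}"
        using 1 by (auto simp: pendant_edges_in_G_edges)
    qed
  next
    case 2
    show ?thesis
    proof (rule degree_ge)
      show "inj_on (\<lambda>i. {VY, VB i 0}) {..<k}"
        by (auto simp: inj_on_def doubleton_eq_iff)
      show "(\<lambda>i. {VY, VB i 0}) ` {..<k} \<subseteq> {e \<in> G_edges k. v \<in> e}"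
        using 2 by (auto simp: pendant_edges_in_G_edges)
    qed
  next
    case (3 i a)
    \<comment> \<open>VA i 0 has no edge to VB i 0; its pendant edge to VX takes that slot.\<close>
    let ?f = "\<lambda>b. if a = 0 \<and> b = 0 then {VX, VA i 0} else {VA i a, VB i b}"
    show ?thesis
    proof (rule degree_ge)
      show "inj_on ?f {..<k}"
        by (auto simp: inj_on_def doubleton_eq_iff split: if_splits)
      show "?f ` {..<k} \<subseteq> {e \<in> G_edges k. v \<in> e}"
        using 3 by (auto simp: pendant_edges_in_G_edges internal_edge_in_G_edges)
    qed
  next
    case (4 i b)
    let ?f = "\<lambda>a. if a = 0 \<and> b = 0 then {VY, VB i 0} else {VA i a, VB i b}"
    show ?thesis
    proof (rule degree_ge)
      show "inj_on ?f {..<k}"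
        by (auto simp: inj_on_def doubleton_eq_iff split: if_splits)
      show "?f ` {..<k} \<subseteq> {e \<in> G_edges k. v \<in> e}"
        using 4 by (auto simp: pendant_edges_in_G_edges internal_edge_in_G_edges)
    qed
  qed
qed

lemma matching_misses_resistor_side:
  assumes "M \<subseteq> G_edges k" "matching M" "i < k"
    and "{VX, VA i 0} \<in> M" "{VY, VB i 0} \<notin> M"
  shows "\<exists>b<k. VB i b \<notin> \<Union>M"
proof (rule ccontr)
  assume covered: "\<not> ?thesis"
  have "\<exists>a. 0 < a \<and> a < k \<and> {VA i a, VB i b} \<in> M" if "b < k" for b
  proof -
    obtain e where e: "e \<in> M" "VB i b \<in> e"
      using covered \<open>b < k\<close> by blast
    with assms(1) have "e \<in> G_edges k" by blast
    then show ?thesis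
    proof (cases rule: G_edgesE)
      case (3 j a b')
      with e have "j = i" "b' = b" by auto
      moreover have "a \<noteq> 0"
      proof
        assume "a = 0"
        with 3 \<open>j = i\<close> have "VA i 0 \<in> e" "e \<noteq> {VX, VA i 0}"
          by (auto simp: doubleton_eq_iff)
        with matchingD[OF assms(2) e(1) assms(4)] show False
          by blast
      qed
      ultimately show ?thesis
        using 3 e(1) by auto
    qed (use e assms(5) in auto)
  qed
  then obtain g where g: "\<And>b. b < k \<Longrightarrow> 0 < g b \<and> g b < k \<and> {VA i (g b), VB i b} \<in> M"
    by metis
  have "inj_on g {..<k}"
  proof (rule inj_onI)
    fix b b' assume b: "b \<in> {..<k}" "b' \<in> {..<k}" and "g b = g b'"
    from g b have "{VA i (g b), VB i b} \<in> M" "{VA i (g b'), VB i b'} \<in> M"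
      by auto
    from matchingD[OF assms(2) this, of "VA i (g b')"] \<open>g b = g b'\<close>
    have "{VA i (g b), VB i b} = {VA i (g b'), VB i b'}"
      by simp
    then show "b = b'"
      by (auto simp: doubleton_eq_iff)
  qed
  moreover have "g ` {..<k} \<subseteq> {1..<k}"
    using g by (auto simp: Suc_le_eq)
  ultimately have "card {..<k} \<le> card {1..<k}"
    by (intro card_inj_on_le) auto
  with \<open>i < k\<close> show False
    by simp
qed

lemma has_perfect_matching_G_imp_pendant_pair:
  assumes "has_perfect_matching (G_verts k) H" "H \<subseteq> G_edges k"
  shows "\<exists>i<k. {VX, VA i 0} \<in> H \<and> {VY, VB i 0} \<in> H"
proof -
  obtain M where M: "M \<subseteq> H" "matching M" "\<Union>M = G_verts k"
    using assms(1) unfolding has_perfect_matching_def' by blast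
  have "VX \<in> \<Union>M"
    using M(3) unfolding G_verts_def by auto
  then obtain e where e: "e \<in> M" "VX \<in> e" by blast
  with M(1) assms(2) have "e \<in> G_edges k" by blast
  then obtain i where i: "i < k" "{VX, VA i 0} \<in> M"
    by (cases rule: G_edgesE) (use e in auto)
  moreover have "\<forall>b<k. VB i b \<in> \<Union>M"
    using M(3) i(1) unfolding G_verts_def resistor_verts_def by auto
  ultimately have "{VY, VB i 0} \<in> M"
    using matching_misses_resistor_side[of M k i] M(1,2) assms(2) by blast
  with i M(1) show ?thesis by blast
qed

lemma prob_has_perfect_matching_G_le:
  assumes "0 \<le> p" "p \<le> 1"
  shows "measure_pmf.prob (random_subgraph (G_edges k) p) {H. has_perfect_matching (G_verts k) H}
         \<le> real k * p ^ 2"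
proof -
  let ?P = "random_subgraph (G_edges k) p" and ?pair = "\<lambda>i. {{VX, VA i 0}, {VY, VB i 0}}"
  have "measure_pmf.prob ?P {H. has_perfect_matching (G_verts k) H}
      \<le> measure_pmf.prob ?P (\<Union>i<k. {H. \<forall>e\<in>?pair i. (e \<in> H) = True})"
    using set_pmf_random_subgraph has_perfect_matching_G_imp_pendant_pair
    by (intro measure_pmf.finite_measure_mono_AE AE_pmfI) fastforce+
  also have "\<dots> \<le> (\<Sum>i<k. measure_pmf.prob ?P {H. \<forall>e\<in>?pair i. (e \<in> H) = True})"
    by (intro measure_pmf.finite_measure_subadditive_finite) auto
  also have "\<dots> = (\<Sum>i<k. p ^ 2)"
    using assms pendant_edges_in_G_edges
    by (intro sum.cong refl, subst prob_random_subgraph_edges_eq[OF finite_G_edges])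
      (auto simp: doubleton_eq_iff power2_eq_square)
  finally show ?thesis by simp
qed

lemma prob_has_isolated_vertex_G_le:
  assumes "0 \<le> p" "p \<le> 1"
  shows "measure_pmf.prob (random_subgraph (G_edges k) p) {H. has_isolated_vertex (G_verts k) H}
         \<le> (2 * real k ^ 2 + 2) * exp (- (p * real k))"
proof -
  have "measure_pmf.prob (random_subgraph (G_edges k) p) {H. has_isolated_vertex (G_verts k) H}
      \<le> real (card (G_verts k)) * (1 - p) ^ k"
    by (rule prob_has_isolated_vertex_le[OF finite_G_verts finite_G_edges assms vertex_degree_G_ge])
  also have "\<dots> \<le> (2 * real k ^ 2 + 2) * exp (- (p * real k))"
    using assms card_G_verts_le one_minus_power_le_exp by (intro mult_mono) auto
  finally show ?thesis .
qed

lemma tendsto_mult_square_zero: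
  fixes p :: "nat \<Rightarrow> real"
  assumes "p \<in> o(\<lambda>k. (2 * real k ^ 2 + 2) powr (-1/4))"
  shows "(\<lambda>k. real k * p k ^ 2) \<longlonglongrightarrow> 0"
proof -
  have "(\<lambda>k. real k * p k ^ 2) \<in> o(\<lambda>k. real k * ((2 * real k ^ 2 + 2) powr (-1/4)) ^ 2)"
    using assms by (intro landau_o.big_small_mult landau_o.small_power) auto
  also have "(\<lambda>k. real k * ((2 * real k ^ 2 + 2) powr (-1/4)) ^ 2) \<in> O(\<lambda>_. 1)"
    by real_asymp
  finally show ?thesis
    by (auto dest: smalloD_tendsto)
qed

lemma no_perfect_matching_G_asymptotically:
  fixes p :: "nat \<Rightarrow> real"
  assumes "\<forall>k. 0 \<le> p k \<and> p k \<le> 1" "p \<in> o(\<lambda>k. (2 * real k ^ 2 + 2) powr (-1/4))"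
  shows "(\<lambda>k. measure_pmf.prob (random_subgraph (G_edges k) (p k))
                {H. \<not> has_perfect_matching (G_verts k) H}) \<longlonglongrightarrow> 1"
  using assms prob_has_perfect_matching_G_le
  by (intro tendsto_prob_compl_1[OF _ tendsto_mult_square_zero] always_eventually) auto

lemma sqrt_G_order_le:
  assumes "1 \<le> k"
  shows "sqrt (2 * real k ^ 2 + 2) \<le> 2 * real k"
proof (rule real_le_lsqrt)
  have "1 \<le> real k ^ 2"
    using assms by (simp add: one_le_power)
  then show "2 * real k ^ 2 + 2 \<le> (2 * real k) ^ 2"
    by (simp add: power_mult_distrib)
qed simp

lemma no_isolated_vertex_G_asymptotically:
  fixes p :: "nat \<Rightarrow> real"
  assumes p01: "\<forall>k. 0 \<le> p k \<and> p k \<le> 1"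
    and "p \<in> \<omega>(\<lambda>k. ln (2 * real k ^ 2 + 2) / sqrt (2 * real k ^ 2 + 2))"
  shows "(\<lambda>k. measure_pmf.prob (random_subgraph (G_edges k) (p k))
                {H. \<not> has_isolated_vertex (G_verts k) H}) \<longlonglongrightarrow> 1"
proof (rule tendsto_prob_compl_1)
  define n where "n k = 2 * real k ^ 2 + 2" for k
  have "eventually (\<lambda>k. 4 * \<bar>ln (n k) / sqrt (n k)\<bar> \<le> p k) sequentially"
    using p01 assms(2) unfolding n_def by (intro landau_omega.smallD_nonneg_real) auto
  with eventually_ge_at_top[of 1]
  show "eventually (\<lambda>k. measure_pmf.prob (random_subgraph (G_edges k) (p k))
      {H. has_isolated_vertex (G_verts k) H} \<le> 1 / n k) sequentially"
  proof eventually_elim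
    case (elim k)
    have "n k \<ge> 1"
      unfolding n_def by simp
    with elim have p_ge: "4 * (ln (n k) / sqrt (n k)) \<le> p k"
      by simp
    have "sqrt (n k) / 2 \<le> real k"
      using sqrt_G_order_le[OF elim(1)] unfolding n_def by simp
    have "2 * ln (n k) = 4 * (ln (n k) / sqrt (n k)) * (sqrt (n k) / 2)"
      using \<open>n k \<ge> 1\<close> by simp
    also have "\<dots> \<le> 4 * (ln (n k) / sqrt (n k)) * real k"
      using \<open>sqrt (n k) / 2 \<le> real k\<close> \<open>n k \<ge> 1\<close> by (intro mult_left_mono) auto
    also have "\<dots> \<le> p k * real k"
      using p_ge by (rule mult_right_mono) simp
    finally have pk_ge: "2 * ln (n k) \<le> p k * real k" .
    have "measure_pmf.prob (random_subgraph (G_edges k) (p k)) {H. has_isolated_vertex (G_verts k) H}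
        \<le> n k * exp (- (p k * real k))"
      unfolding n_def using p01 by (intro prob_has_isolated_vertex_G_le) auto
    also have "\<dots> = exp (ln (n k) - p k * real k)"
      using \<open>n k \<ge> 1\<close> by (simp add: exp_diff exp_minus divide_inverse)
    also have "\<dots> \<le> exp (- ln (n k))"
      using pk_ge by simp
    also have "\<dots> = 1 / n k"
      using \<open>n k \<ge> 1\<close> by (simp add: exp_minus divide_inverse)
    finally show ?case .
  qed
  show "(\<lambda>k. 1 / n k) \<longlonglongrightarrow> 0"
    unfolding n_def by real_asymp
qed

theorem propositionA2:
  fixes n :: "nat \<Rightarrow> real"
  defines "n \<equiv> (\<lambda>k. 2 * real k ^ 2 + 2)"
  shows
    "(\<forall>p :: nat \<Rightarrow> real. (\<forall>k. 0 \<le> p k \<and> p k \<le> 1) \<longrightarrow>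
        p \<in> o(\<lambda>k. n k powr (-1/4)) \<longrightarrow>
        (\<lambda>k. measure_pmf.prob (random_subgraph (G_edges k) (p k))
                {H. \<not> has_perfect_matching (G_verts k) H}) \<longlonglongrightarrow> 1)
   \<and> (\<forall>p :: nat \<Rightarrow> real. (\<forall>k. 0 \<le> p k \<and> p k \<le> 1) \<longrightarrow>
        p \<in> \<omega>(\<lambda>k. ln (n k) / sqrt (n k)) \<longrightarrow>
        (\<lambda>k. measure_pmf.prob (random_subgraph (G_edges k) (p k))
                {H. \<not> has_isolated_vertex (G_verts k) H}) \<longlonglongrightarrow> 1)"
  unfolding n_def
  using no_perfect_matching_G_asymptotically no_isolated_vertex_G_asymptotically by blast

end
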